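(* In an almost zero-dimensional space $X$, every closed $\sigma$C-set is a C-set.
   Context: All spaces are separable and metrizable. A subset $A$ of a space $X$ is a C-set in $X$ if $A$ is an intersection of clopen subsets of $X$; a $\sigma$C-set is a countable union of C-sets in $X$. $X$ is almost zero-dimensional if every point of $X$ has a neighborhood basis consisting of C-sets in $X$. *)

theory Defs
  imports "HOL-Analysis.Analysis"
begin

text \<open>A C-set in X: an intersection of clopen subsets of X (the empty intersection being X).\<close>
definition C_set :: "'a topology \<Rightarrow> 'a set \<Rightarrow> bool" where
  "C_set X A \<longleftrightarrow>
     (\<exists>\<U>. (\<forall>U\<in>\<U>. closedin X U \<and> openin X U) \<and> A = topspace X \<inter> \<Inter>\<U>)"

definition sigmaC_set :: "'a topology \<Rightarrow> 'a set \<Rightarrow> bool" where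
  "sigmaC_set X A \<longleftrightarrow>
     (\<exists>\<A>. countable \<A> \<and> (\<forall>B\<in>\<A>. C_set X B) \<and> A = \<Union>\<A>)"

definition almost_zero_dimensional :: "'a topology \<Rightarrow> bool" where
  "almost_zero_dimensional X \<longleftrightarrow> neighbourhood_base_of (C_set X) X"

end

theory Submission
  imports Defs
begin

text \<open>
  A separable metrizable space is second countable, hence hereditarily Lindelof. Write the
  closed \<open>\<sigma>\<close>C-set as \<open>A = \<Union>\<^sub>n a\<^sub>n\<close> and fix \<open>x \<notin> A\<close>. By almost zero-dimensionality and the
  Lindelof property, the open complement of \<open>A\<close> is covered by open sets \<open>W\<^sub>k \<subseteq> N\<^sub>k\<close> with C-sets
  \<open>N\<^sub>k\<close> missing \<open>A\<close>; let \<open>N\<^sub>x\<close> be a further such C-set containing \<open>x\<close>. In a Lindelof space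
  disjoint C-sets are separated by clopen sets, and finite unions of C-sets are C-sets, so there
  are clopen \<open>P\<^sub>n \<supseteq> a\<^sub>n\<close> missing \<open>N\<^sub>x \<union> N\<^sub>0 \<union> \<dots> \<union> N\<^sub>n\<close>. Their union \<open>U\<close> is open, and also closed: near
  a point of \<open>W\<^sub>k\<close> only \<open>P\<^sub>0, \<dots>, P\<^sub>k\<^sub>-\<^sub>1\<close> can meet \<open>U\<close>. Thus \<open>U\<close> is a clopen superset of \<open>A\<close> avoiding \<open>x\<close>.
\<close>

lemma (in Metric_space) second_countable_mtopology:
  assumes "separable_space mtopology"
  shows "second_countable mtopology"
proof -
  obtain C where C: "countable C" "C \<subseteq> M" "mtopology closure_of C = M"
    using assms unfolding separable_space_def by auto
  define \<B> where "\<B> = (\<lambda>(c, n). mball c (1 / Suc n)) ` (C \<times> UNIV)"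
  have "\<exists>V\<in>\<B>. x \<in> V \<and> V \<subseteq> U" if "openin mtopology U" "x \<in> U" for U x
  proof -
    have xM: "x \<in> M" and "\<exists>r>0. mball x r \<subseteq> U"
      using that unfolding openin_mtopology by auto
    then obtain r where r: "r > 0" "mball x r \<subseteq> U"
      by blast
    obtain n :: nat where n: "1 / Suc n < r / 2"
      using r(1) by (metis half_gt_zero_iff inverse_eq_divide reals_Archimedean)
    have "x \<in> mtopology closure_of C"
      using C(3) xM by simp
    then have "\<forall>r>0. \<exists>y\<in>C. y \<in> mball x r"
      by (simp add: metric_closure_of)
    moreover have "1 / Suc n > 0"
      by simp
    ultimately obtain c where c: "c \<in> C" "c \<in> mball x (1 / Suc n)"
      by blast
    have "mball c (1 / Suc n) \<subseteq> mball x r"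
      by (rule mball_subset) (use c n commute in auto)
    moreover have "x \<in> mball c (1 / Suc n)"
      using c by (simp add: commute)
    ultimately show ?thesis
      using c(1) r(2) unfolding \<B>_def by force
  qed
  moreover have "countable \<B>"
    using C(1) by (simp add: \<B>_def)
  ultimately show ?thesis
    unfolding second_countable_def by (intro exI[of _ \<B>]) (auto simp: \<B>_def)
qed

lemma metrizable_separable_imp_second_countable:
  assumes "metrizable_space X" "separable_space X"
  shows "second_countable X"
proof -
  obtain M d where Md: "Metric_space M d" "X = Metric_space.mtopology M d"
    using assms(1) unfolding metrizable_space_def by blast
  show ?thesis
    using Md(1) assms(2) unfolding Md(2) by (rule Metric_space.second_countable_mtopology)
qed

lemma Lindelof_space_subtopology_nat_cover:
  assumes "Lindelof_space (subtopology X S)" "S \<subseteq> topspace X" "S \<noteq> {}"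
    and "\<And>G. G \<in> \<G> \<Longrightarrow> openin X G" "S \<subseteq> \<Union>\<G>"
  obtains g :: "nat \<Rightarrow> 'a set" where "range g \<subseteq> \<G>" "S \<subseteq> (\<Union>i. g i)"
proof -
  obtain \<V> where \<V>: "countable \<V>" "\<V> \<subseteq> \<G>" "S \<subseteq> \<Union>\<V>"
    using assms(1,4,5) unfolding Lindelof_space_subtopology_subset[OF assms(2)] by meson
  then have "\<V> \<noteq> {}"
    using assms(3) by auto
  with \<V> show thesis
    using that[of "from_nat_into \<V>"] by simp
qed

lemma C_set_subset_topspace: "C_set X A \<Longrightarrow> A \<subseteq> topspace X"
  unfolding C_set_def by blast

lemma C_set_empty: "C_set X {}"
  unfolding C_set_def by (intro exI[of _ "{{}}"]) auto

lemma C_set_Un: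
  assumes "C_set X A" "C_set X B"
  shows "C_set X (A \<union> B)"
proof -
  obtain \<U> where \<U>: "\<forall>U\<in>\<U>. closedin X U \<and> openin X U" "A = topspace X \<inter> \<Inter>\<U>"
    using assms(1) unfolding C_set_def by blast
  obtain \<V> where \<V>: "\<forall>V\<in>\<V>. closedin X V \<and> openin X V" "B = topspace X \<inter> \<Inter>\<V>"
    using assms(2) unfolding C_set_def by blast
  let ?\<W> = "{U \<union> V | U V. U \<in> \<U> \<and> V \<in> \<V>}"
  have "\<forall>W\<in>?\<W>. closedin X W \<and> openin X W"
    using \<U>(1) \<V>(1) by (auto intro: closedin_Un openin_Un)
  moreover have "A \<union> B = topspace X \<inter> \<Inter>?\<W>"
  proof
    show "A \<union> B \<subseteq> topspace X \<inter> \<Inter>?\<W>"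
      using \<U>(2) \<V>(2) by blast
    show "topspace X \<inter> \<Inter>?\<W> \<subseteq> A \<union> B"
    proof
      fix z assume z: "z \<in> topspace X \<inter> \<Inter>?\<W>"
      show "z \<in> A \<union> B"
      proof (rule ccontr)
        assume "z \<notin> A \<union> B"
        then obtain U V where "U \<in> \<U>" "z \<notin> U" "V \<in> \<V>" "z \<notin> V"
          using z \<U>(2) \<V>(2) by blast
        then show False
          using z by blast
      qed
    qed
  qed
  ultimately show ?thesis
    unfolding C_set_def by blast
qed

lemma C_set_Union:
  assumes "finite \<F>" "\<forall>B\<in>\<F>. C_set X B"
  shows "C_set X (\<Union>\<F>)"
  using assms by (induction rule: finite_induct) (auto intro: C_set_empty C_set_Un)

lemma clopen_disjointed_Union:
  fixes g :: "nat \<Rightarrow> 'a set"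
  assumes clopen: "\<And>i. closedin X (g i) \<and> openin X (g i)" and cover: "topspace X \<subseteq> (\<Union>i. g i)"
  shows "closedin X (\<Union>i\<in>I. disjointed g i) \<and> openin X (\<Union>i\<in>I. disjointed g i)"
proof -
  have "openin X (disjointed g i)" for i
    unfolding disjointed_def using clopen by (intro openin_diff closedin_Union) auto
  then have open_Union: "openin X (\<Union>i\<in>J. disjointed g i)" for J
    by blast
  have subset: "disjointed g i \<subseteq> topspace X" for i
    by (meson clopen disjointed_subset openin_subset order_trans)
  have "topspace X - (\<Union>i\<in>I. disjointed g i) = (\<Union>i\<in>-I. disjointed g i)"
  proof
    show "topspace X - (\<Union>i\<in>I. disjointed g i) \<subseteq> (\<Union>i\<in>-I. disjointed g i)"
      using cover UN_disjointed_eq[of g] by blast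
    show "(\<Union>i\<in>-I. disjointed g i) \<subseteq> topspace X - (\<Union>i\<in>I. disjointed g i)"
    proof
      fix z assume "z \<in> (\<Union>i\<in>-I. disjointed g i)"
      then obtain i where i: "i \<notin> I" "z \<in> disjointed g i"
        by blast
      then have "z \<notin> disjointed g j" if "j \<in> I" for j
        using that i less_disjoint_disjointed by (metis disjoint_iff linorder_neqE_nat)
      with i subset show "z \<in> topspace X - (\<Union>i\<in>I. disjointed g i)"
        by blast
    qed
  qed
  then have "openin X (topspace X - (\<Union>i\<in>I. disjointed g i))"
    using open_Union by metis
  moreover have "(\<Union>i\<in>I. disjointed g i) \<subseteq> topspace X"
    using subset by (simp add: UN_least)
  ultimately show ?thesis
    using open_Union unfolding closedin_def by blast
qed

lemma Lindelof_space_clopen_separation_C_sets: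
  assumes "Lindelof_space X" "C_set X B" "C_set X N" "B \<inter> N = {}"
  obtains Q where "closedin X Q" "openin X Q" "B \<subseteq> Q" "Q \<inter> N = {}"
proof (cases "topspace X = {}")
  case True
  then show thesis
    using that[of "{}"] C_set_subset_topspace[OF assms(2)] by auto
next
  case False
  obtain \<U> where \<U>: "\<forall>U\<in>\<U>. closedin X U \<and> openin X U" "B = topspace X \<inter> \<Inter>\<U>"
    using assms(2) unfolding C_set_def by blast
  obtain \<V> where \<V>: "\<forall>V\<in>\<V>. closedin X V \<and> openin X V" "N = topspace X \<inter> \<Inter>\<V>"
    using assms(3) unfolding C_set_def by blast
  define \<G> where "\<G> = (\<lambda>U. topspace X - U) ` (\<U> \<union> \<V>)"
  have clopen: "closedin X G \<and> openin X G" if "G \<in> \<G>" for G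
    using that \<U>(1) \<V>(1) unfolding \<G>_def by auto
  have "topspace X \<subseteq> \<Union>\<G>"
    using assms(4) \<U>(2) \<V>(2) unfolding \<G>_def by auto
  then obtain g :: "nat \<Rightarrow> 'a set" where g: "range g \<subseteq> \<G>" "topspace X \<subseteq> (\<Union>i. g i)"
    using Lindelof_space_subtopology_nat_cover[of X "topspace X" \<G>] assms(1) False clopen
    by (metis subset_refl subtopology_topspace)
  have misses: "g i \<inter> B = {} \<or> g i \<inter> N = {}" for i
    using g(1) \<U>(2) \<V>(2) unfolding \<G>_def by blast
  define Q where "Q = (\<Union>i\<in>{i. g i \<inter> N = {}}. disjointed g i)"
  have "closedin X Q \<and> openin X Q"
    unfolding Q_def using clopen g by (intro clopen_disjointed_Union) auto
  moreover have "B \<subseteq> Q"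
  proof
    fix b assume b: "b \<in> B"
    then obtain i where i: "b \<in> disjointed g i"
      using g(2) UN_disjointed_eq[of g] C_set_subset_topspace[OF assms(2)] by blast
    then have "g i \<inter> B \<noteq> {}"
      using b i disjointed_subset[of g i] by blast
    with i misses show "b \<in> Q"
      unfolding Q_def by blast
  qed
  moreover have "Q \<inter> N = {}"
    unfolding Q_def using disjointed_subset[of g] by auto
  ultimately show thesis
    using that by blast
qed

lemma sigmaC_set_range:
  assumes "sigmaC_set X A"
  obtains a :: "nat \<Rightarrow> 'a set" where "\<And>n. C_set X (a n)" "A = (\<Union>n. a n)"
proof -
  obtain \<A> where \<A>: "countable \<A>" "\<forall>B\<in>\<A>. C_set X B" "A = \<Union>\<A>"
    using assms unfolding sigmaC_set_def by blast
  \<comment> \<open>Adding \<open>{}\<close> makes the family nonempty, as \<open>from_nat_into\<close> requires.\<close>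
  show thesis
  proof (rule that)
    show "C_set X (from_nat_into (insert {} \<A>) n)" for n
      using from_nat_into[of "insert {} \<A>" n] \<A>(2) C_set_empty by auto
    show "A = (\<Union>n. from_nat_into (insert {} \<A>) n)"
      using \<A>(1,3) by simp
  qed
qed

lemma almost_zero_dimensional_open_cover:
  assumes "almost_zero_dimensional X" "Lindelof_space (subtopology X S)" "openin X S" "S \<noteq> {}"
  obtains W N :: "nat \<Rightarrow> 'a set"
  where "\<And>k. openin X (W k)" "\<And>k. C_set X (N k)" "\<And>k. W k \<subseteq> N k" "\<And>k. N k \<subseteq> S"
    and "S \<subseteq> (\<Union>k. W k)"
proof -
  define \<G> where "\<G> = {W. openin X W \<and> (\<exists>N. C_set X N \<and> W \<subseteq> N \<and> N \<subseteq> S)}"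
  have "S \<subseteq> \<Union>\<G>"
  proof
    fix y assume "y \<in> S"
    then obtain W N where "openin X W" "C_set X N" "y \<in> W" "W \<subseteq> N" "N \<subseteq> S"
      using assms(1,3) unfolding almost_zero_dimensional_def neighbourhood_base_of by meson
    then show "y \<in> \<Union>\<G>"
      unfolding \<G>_def by blast
  qed
  moreover have "openin X G" if "G \<in> \<G>" for G
    using that unfolding \<G>_def by blast
  ultimately obtain W :: "nat \<Rightarrow> 'a set" where W: "range W \<subseteq> \<G>" "S \<subseteq> (\<Union>k. W k)"
    using Lindelof_space_subtopology_nat_cover[OF assms(2) openin_subset[OF assms(3)] assms(4)]
    by metis
  then have "\<forall>k. \<exists>N. C_set X N \<and> W k \<subseteq> N \<and> N \<subseteq> S"
    unfolding \<G>_def by blast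
  then obtain N where "\<forall>k. C_set X (N k) \<and> W k \<subseteq> N k \<and> N k \<subseteq> S"
    by metis
  moreover have "openin X (W k)" for k
    using W(1) unfolding \<G>_def by blast
  ultimately show thesis
    using that[of W N] W(2) by blast
qed

lemma closedin_UN_if_eventually_avoided:
  fixes P W :: "nat \<Rightarrow> 'a set"
  assumes P: "\<And>n. closedin X (P n)" and W: "\<And>k. openin X (W k)"
    and cover: "topspace X - (\<Union>n. P n) \<subseteq> (\<Union>k. W k)"
    and disjoint: "\<And>k n. k \<le> n \<Longrightarrow> P n \<inter> W k = {}"
  shows "closedin X (\<Union>n. P n)"
proof -
  have "openin X (W k - (\<Union>j<k. P j))" for k
    using P W by (intro openin_diff closedin_Union) auto
  then have "openin X (\<Union>k. W k - (\<Union>j<k. P j))"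
    by blast
  moreover have "topspace X - (\<Union>n. P n) = (\<Union>k. W k - (\<Union>j<k. P j))"
  proof
    show "topspace X - (\<Union>n. P n) \<subseteq> (\<Union>k. W k - (\<Union>j<k. P j))"
      using cover by (fastforce simp: subset_iff)
    show "(\<Union>k. W k - (\<Union>j<k. P j)) \<subseteq> topspace X - (\<Union>n. P n)"
    proof
      fix z assume "z \<in> (\<Union>k. W k - (\<Union>j<k. P j))"
      then obtain k where z: "z \<in> W k" "\<forall>j<k. z \<notin> P j"
        by blast
      have "z \<notin> P n" for n
        using z disjoint[of k n] by (cases "n < k") auto
      moreover have "z \<in> topspace X"
        using z(1) W openin_subset by blast
      ultimately show "z \<in> topspace X - (\<Union>n. P n)"
        by blast
    qed
  qed
  ultimately show ?thesis
    using P closedin_subset unfolding closedin_def by (metis UN_least)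
qed

lemma closed_sigmaC_set_clopen_separation:
  assumes "second_countable X" "almost_zero_dimensional X"
    and "closedin X A" "sigmaC_set X A" "x \<in> topspace X" "x \<notin> A"
  obtains U where "closedin X U" "openin X U" "A \<subseteq> U" "x \<notin> U"
proof -
  obtain a :: "nat \<Rightarrow> 'a set" where a: "\<And>n. C_set X (a n)" "A = (\<Union>n. a n)"
    using sigmaC_set_range[OF assms(4)] by metis
  define S where "S = topspace X - A"
  have S: "openin X S" "x \<in> S"
    using assms(3,5,6) unfolding S_def by auto
  have "Lindelof_space (subtopology X S)"
    by (simp add: assms(1) second_countable_imp_Lindelof_space second_countable_subtopology)
  then obtain W N :: "nat \<Rightarrow> 'a set" where W: "\<And>k. openin X (W k)" "S \<subseteq> (\<Union>k. W k)"
    and N: "\<And>k. C_set X (N k)" "\<And>k. W k \<subseteq> N k" "\<And>k. N k \<subseteq> S"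
    by (rule almost_zero_dimensional_open_cover[OF assms(2) _ S(1)]) (use S(2) in auto)
  have "\<exists>U Nx. openin X U \<and> C_set X Nx \<and> x \<in> U \<and> U \<subseteq> Nx \<and> Nx \<subseteq> S"
    using assms(2) S unfolding almost_zero_dimensional_def neighbourhood_base_of by blast
  then obtain Nx where Nx: "C_set X Nx" "x \<in> Nx" "Nx \<subseteq> S"
    by blast
  have "\<exists>P. closedin X P \<and> openin X P \<and> a n \<subseteq> P \<and> P \<inter> (Nx \<union> (\<Union>k\<le>n. N k)) = {}" for n
  proof -
    have "C_set X (Nx \<union> (\<Union>k\<le>n. N k))"
      using Nx(1) N(1) by (intro C_set_Un C_set_Union) auto
    moreover have "a n \<inter> (Nx \<union> (\<Union>k\<le>n. N k)) = {}"
      using a(2) Nx(3) N(3) unfolding S_def by blast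
    ultimately show ?thesis
      using Lindelof_space_clopen_separation_C_sets[OF _ a(1)]
        second_countable_imp_Lindelof_space[OF assms(1)] by metis
  qed
  then obtain P where P: "\<And>n. closedin X (P n)" "\<And>n. openin X (P n)" "\<And>n. a n \<subseteq> P n"
    and P_disjoint: "\<And>n. P n \<inter> (Nx \<union> (\<Union>k\<le>n. N k)) = {}"
    by metis
  show thesis
  proof (rule that[of "\<Union>n. P n"])
    show "openin X (\<Union>n. P n)"
      using P(2) by (intro openin_Union) auto
    show "A \<subseteq> (\<Union>n. P n)"
      using a(2) P(3) by blast
    show "x \<notin> (\<Union>n. P n)"
      using Nx(2) P_disjoint by blast
    show "closedin X (\<Union>n. P n)"
    proof (rule closedin_UN_if_eventually_avoided[OF P(1) W(1)])
      show "topspace X - (\<Union>n. P n) \<subseteq> (\<Union>k. W k)"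
        using W(2) a(2) P(3) unfolding S_def by blast
      show "P n \<inter> W k = {}" if "k \<le> n" for k n
        using that P_disjoint[of n] N(2)[of k] by blast
    qed
  qed
qed

lemma C_setI_clopen_separation:
  assumes "A \<subseteq> topspace X"
    and "\<And>x. x \<in> topspace X \<Longrightarrow> x \<notin> A \<Longrightarrow> \<exists>U. closedin X U \<and> openin X U \<and> A \<subseteq> U \<and> x \<notin> U"
  shows "C_set X A"
  unfolding C_set_def
  by (rule exI[of _ "{U. closedin X U \<and> openin X U \<and> A \<subseteq> U}"]) (use assms in blast)

theorem theorem4p4:
  fixes X :: "'a topology" and A :: "'a set"
  assumes "metrizable_space X" and "separable_space X"
    and "almost_zero_dimensional X"
    and "closedin X A" and "sigmaC_set X A"
  shows "C_set X A"
proof (rule C_setI_clopen_separation)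
  show "A \<subseteq> topspace X"
    using assms(4) by (rule closedin_subset)
  have "second_countable X"
    using assms(1,2) by (rule metrizable_separable_imp_second_countable)
  then show "\<exists>U. closedin X U \<and> openin X U \<and> A \<subseteq> U \<and> x \<notin> U"
    if "x \<in> topspace X" "x \<notin> A" for x
    using closed_sigmaC_set_clopen_separation assms(3-5) that by metis
qed

end
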